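(* Let $A$ be a finite skew brace such that $\Lambda(A)$ consists of exactly two vertices which are not adjacent. Then $A$ is isomorphic to the almost trivial skew brace on the symmetric group $S_3$, i.e. the skew brace $(S_3,+,\circ)$ with $g\circ h=gh$ and $g+h=hg$.
   Context: A skew brace is a triple $(A,+,\circ)$ where $(A,+)$ and $(A,\circ)$ are groups with $a\circ(b+c)=a\circ b-a+a\circ c$. $\lambda_a(b)=-a+a\circ b$ defines an action of $(A,\circ)$ on $(A,+)$ by automorphisms. $\Lambda(A)$ is the graph whose vertices are the $\lambda$-orbits of size $>1$, two distinct vertices $L_1,L_2$ adjacent iff $\gcd(|L_1|,|L_2|)\ne1$. *)

theory Defs
  imports "HOL-Algebra.Sym_Groups"
begin

text \<open>A skew brace is given by two group structures on the same carrier: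
  G is the additive group (A,+), written multiplicatively in HOL-Algebra,
  and H is the multiplicative group (A,\<circ>).\<close>

definition skew_brace :: "'a monoid \<Rightarrow> 'a monoid \<Rightarrow> bool" where
  "skew_brace G H \<longleftrightarrow> group G \<and> group H \<and> carrier H = carrier G \<and>
     (\<forall>a\<in>carrier G. \<forall>b\<in>carrier G. \<forall>c\<in>carrier G.
        a \<otimes>\<^bsub>H\<^esub> (b \<otimes>\<^bsub>G\<^esub> c) =
        ((a \<otimes>\<^bsub>H\<^esub> b) \<otimes>\<^bsub>G\<^esub> inv\<^bsub>G\<^esub> a) \<otimes>\<^bsub>G\<^esub> (a \<otimes>\<^bsub>H\<^esub> c))"

definition brace_lambda :: "'a monoid \<Rightarrow> 'a monoid \<Rightarrow> 'a \<Rightarrow> 'a \<Rightarrow> 'a" where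
  "brace_lambda G H a b = inv\<^bsub>G\<^esub> a \<otimes>\<^bsub>G\<^esub> (a \<otimes>\<^bsub>H\<^esub> b)"

definition lambda_orbit :: "'a monoid \<Rightarrow> 'a monoid \<Rightarrow> 'a \<Rightarrow> 'a set" where
  "lambda_orbit G H b = {brace_lambda G H a b | a. a \<in> carrier H}"

definition lambda_orbits :: "'a monoid \<Rightarrow> 'a monoid \<Rightarrow> 'a set set" where
  "lambda_orbits G H = lambda_orbit G H ` carrier G"

definition Lambda_vertices :: "'a monoid \<Rightarrow> 'a monoid \<Rightarrow> 'a set set" where
  "Lambda_vertices G H = {L \<in> lambda_orbits G H. card L > 1}"

definition Lambda_adj :: "'a set \<Rightarrow> 'a set \<Rightarrow> bool" where
  "Lambda_adj L1 L2 \<longleftrightarrow> L1 \<noteq> L2 \<and> gcd (card L1) (card L2) \<noteq> 1"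

definition skew_brace_iso ::
  "'a monoid \<Rightarrow> 'a monoid \<Rightarrow> 'b monoid \<Rightarrow> 'b monoid \<Rightarrow> ('a \<Rightarrow> 'b) \<Rightarrow> bool" where
  "skew_brace_iso G H G' H' f \<longleftrightarrow> bij_betw f (carrier G) (carrier G') \<and>
     (\<forall>a\<in>carrier G. \<forall>b\<in>carrier G.
        f (a \<otimes>\<^bsub>G\<^esub> b) = f a \<otimes>\<^bsub>G'\<^esub> f b \<and> f (a \<otimes>\<^bsub>H\<^esub> b) = f a \<otimes>\<^bsub>H'\<^esub> f b)"

text \<open>The almost trivial skew brace on S_3: g \<circ> h = gh, g + h = hg,
  where gh is the product in sym_group 3 (composition).\<close>
definition S3_circ :: "(nat \<Rightarrow> nat) monoid" where
  "S3_circ = sym_group 3"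

definition S3_add :: "(nat \<Rightarrow> nat) monoid" where
  "S3_add = \<lparr> carrier = carrier (sym_group 3),
              mult = (\<lambda>g h. h \<otimes>\<^bsub>sym_group 3\<^esub> g),
              one = \<one>\<^bsub>sym_group 3\<^esub> \<rparr>"

end

(*
  The map a \<mapsto> \<lambda>_a is an action of (A,\<circ>) on (A,+) by automorphisms, so the orbits
  partition A into the subgroup F of fixed points and the two vertices, and all their sizes
  divide |A|. This class equation with two coprime orbit sizes > 1 forces |A| = 6, F = 0 and
  orbits C, L of sizes 2 and 3. Being \<lambda>-orbits, C and L are closed under negation and
  doubling, which determines (A,+): L consists of involutions, C = {c, -c} with c + c = -c,
  and c + t = t - c for t in L; so (A,+) is S_3 with C the 3-cycles and L the transpositions.
  The stabiliser sizes 3 and 2 then force \<lambda>_a(x) = -a + x + a on L, hence on all of A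
  since L generates (A,+); that is, a \<circ> b = b + a. As (A,+) has trivial centre, (A,\<circ>) acts
  faithfully on the three points of L, which identifies it with the symmetric group S_3.
*)

theory Submission
  imports Defs "HOL-Algebra.Group_Action" "HOL-Computational_Algebra.Primes"
begin

lemma class_equation_two_orbits_ordered:
  fixes f m1 m2 :: nat
  assumes "0 < f" "1 < m1" "m1 < m2" "coprime m1 m2"
    and "f dvd f + m1 + m2" "m1 dvd f + m1 + m2" "m2 dvd f + m1 + m2"
  shows "f = 1 \<and> m1 = 2 \<and> m2 = 3"
proof -
  have f_dvd: "f dvd m1 + m2" using assms(5) by (simp add: add.assoc)
  then have f_le: "f \<le> m1 + m2" using assms(2) by (simp add: dvd_imp_le)
  have "m1 * m2 dvd f + m1 + m2" using assms(4,6,7) by (simp add: divides_mult)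
  then obtain k where k: "f + m1 + m2 = m1 * m2 * k" by blast
  have "m1 * k * m2 = f + m1 + m2" using k by (simp add: mult_ac)
  also have "\<dots> \<le> 2 * m1 + 2 * m2" using f_le by simp
  also have "\<dots> < 4 * m2" using assms(3) by simp
  finally have "m1 * k * m2 < 4 * m2" .
  then have "m1 * k < 4" by simp
  have "0 < k" using k assms(1) by (auto intro: gr0I)
  then have "m1 \<le> m1 * k" by simp
  then have "m1 \<le> 3" using \<open>m1 * k < 4\<close> by linarith
  have "k = 1"
  proof (rule ccontr)
    assume "k \<noteq> 1"
    then have "2 * 2 \<le> m1 * k" using \<open>0 < k\<close> assms(2) by (intro mult_mono) auto
    then show False using \<open>m1 * k < 4\<close> by simp
  qed
  have "m2 \<le> 6"
  proof (cases "m1 = 2")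
    case True
    then have "m2 = f + 2" using k \<open>k = 1\<close> by simp
    then have "m1 + m2 = f + 4" using True by simp
    then have "f dvd 4" using f_dvd by simp
    then show ?thesis using \<open>m2 = f + 2\<close> by (auto dest: dvd_imp_le)
  next
    case False
    then have "m1 = 3" using \<open>m1 \<le> 3\<close> assms(2) by linarith
    then show ?thesis using k \<open>k = 1\<close> f_le by simp
  qed
  then have "m2 = 3 \<or> m2 = 4 \<or> m2 = 5 \<or> m2 = 6" using assms(2,3) by linarith
  moreover have "m1 = 2 \<or> m1 = 3" using assms(2) \<open>m1 \<le> 3\<close> by linarith
  moreover have "f + m1 + m2 = m1 * m2" using k \<open>k = 1\<close> by simp
  ultimately show ?thesis using f_dvd assms(3,4) by (elim disjE) (simp_all add: coprime_iff_gcd_eq_1)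
qed

lemma class_equation_two_orbits:
  fixes f m1 m2 :: nat
  assumes "0 < f" "1 < m1" "1 < m2" "coprime m1 m2"
    and "f dvd f + m1 + m2" "m1 dvd f + m1 + m2" "m2 dvd f + m1 + m2"
  shows "f = 1 \<and> {m1, m2} = {2, 3}"
proof (cases "m1 < m2")
  case True
  then show ?thesis using class_equation_two_orbits_ordered[of f m1 m2] assms by auto
next
  case False
  moreover have "m1 \<noteq> m2" using assms(2,4) by auto
  ultimately have "m2 < m1" by linarith
  then show ?thesis
    using class_equation_two_orbits_ordered[of f m2 m1] assms by (auto simp: add_ac coprime_commute)
qed

lemma involution_fixpoint_card_3:
  assumes "card S = 3" "\<And>x. x \<in> S \<Longrightarrow> f x \<in> S" "\<And>x. x \<in> S \<Longrightarrow> f (f x) = x"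
  shows "\<exists>x\<in>S. f x = x"
proof -
  obtain p q r where S: "S = {p, q, r}" "p \<noteq> q" "q \<noteq> r" "p \<noteq> r"
    using assms(1) by (auto simp: card_3_iff)
  then show ?thesis using assms(2,3) by (smt (verit) insertCI insertE singletonD)
qed

lemma (in group) mult_inv_cancel_left [simp]:
  "x \<in> carrier G \<Longrightarrow> y \<in> carrier G \<Longrightarrow> x \<otimes> (inv x \<otimes> y) = y"
  by (simp add: m_assoc[symmetric])

lemma (in group) inv_mult_cancel_left [simp]:
  "x \<in> carrier G \<Longrightarrow> y \<in> carrier G \<Longrightarrow> inv x \<otimes> (x \<otimes> y) = y"
  by (simp add: m_assoc[symmetric])

locale skew_brace_setting =
  fixes G H :: "'a monoid"
  assumes skew_brace: "skew_brace G H"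
begin

sublocale G: group G
  using skew_brace by (simp add: skew_brace_def)

sublocale H: group H
  using skew_brace by (simp add: skew_brace_def)

abbreviation add :: "'a \<Rightarrow> 'a \<Rightarrow> 'a" (infixl "\<boxplus>" 65) where "a \<boxplus> b \<equiv> a \<otimes>\<^bsub>G\<^esub> b"
abbreviation circ :: "'a \<Rightarrow> 'a \<Rightarrow> 'a" (infixl "\<star>" 70) where "a \<star> b \<equiv> a \<otimes>\<^bsub>H\<^esub> b"
abbreviation neg :: "'a \<Rightarrow> 'a" ("\<boxminus> _" [81] 80) where "\<boxminus> a \<equiv> inv\<^bsub>G\<^esub> a"
abbreviation zero :: 'a ("0\<^sub>A") where "0\<^sub>A \<equiv> \<one>\<^bsub>G\<^esub>"
abbreviation A :: "'a set" where "A \<equiv> carrier G"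
abbreviation lam :: "'a \<Rightarrow> 'a \<Rightarrow> 'a" where "lam \<equiv> brace_lambda G H"
abbreviation orb :: "'a \<Rightarrow> 'a set" where "orb \<equiv> lambda_orbit G H"

lemma carrier_H [simp]: "carrier H = A"
  using skew_brace by (simp add: skew_brace_def)

lemma circ_closed [simp]: "a \<in> A \<Longrightarrow> b \<in> A \<Longrightarrow> a \<star> b \<in> A"
  using H.m_closed by simp

lemma inv_H_closed [simp]: "a \<in> A \<Longrightarrow> inv\<^bsub>H\<^esub> a \<in> A"
  using H.inv_closed by simp

lemma circ_add_distrib:
  "a \<in> A \<Longrightarrow> b \<in> A \<Longrightarrow> c \<in> A \<Longrightarrow> a \<star> (b \<boxplus> c) = a \<star> b \<boxplus> \<boxminus> a \<boxplus> a \<star> c"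
  using skew_brace by (simp add: skew_brace_def)

lemma one_H_eq_zero: "\<one>\<^bsub>H\<^esub> = 0\<^sub>A"
proof -
  have e: "\<one>\<^bsub>H\<^esub> \<in> A" using H.one_closed by simp
  have "\<one>\<^bsub>H\<^esub> \<star> (0\<^sub>A \<boxplus> 0\<^sub>A) = \<one>\<^bsub>H\<^esub> \<star> 0\<^sub>A \<boxplus> \<boxminus> \<one>\<^bsub>H\<^esub> \<boxplus> \<one>\<^bsub>H\<^esub> \<star> 0\<^sub>A"
    by (rule circ_add_distrib) (use e in simp_all)
  then have "\<boxminus> \<one>\<^bsub>H\<^esub> = 0\<^sub>A" using e by (simp add: G.m_assoc)
  then show ?thesis using e by (metis G.inv_eq_1_iff)
qed

lemma circ_zero_left [simp]: "b \<in> A \<Longrightarrow> 0\<^sub>A \<star> b = b"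
  using H.l_one by (simp add: one_H_eq_zero[symmetric])

lemma circ_zero_right [simp]: "a \<in> A \<Longrightarrow> a \<star> 0\<^sub>A = a"
  using H.r_one by (simp add: one_H_eq_zero[symmetric])

lemma lam_closed [simp]: "a \<in> A \<Longrightarrow> b \<in> A \<Longrightarrow> lam a b \<in> A"
  by (simp add: brace_lambda_def)

lemma circ_eq_add_lam: "a \<in> A \<Longrightarrow> b \<in> A \<Longrightarrow> a \<star> b = a \<boxplus> lam a b"
  by (simp add: brace_lambda_def G.m_assoc[symmetric])

lemma lam_add: "a \<in> A \<Longrightarrow> b \<in> A \<Longrightarrow> c \<in> A \<Longrightarrow> lam a (b \<boxplus> c) = lam a b \<boxplus> lam a c"
  by (simp add: brace_lambda_def circ_add_distrib G.m_assoc)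

lemma lam_zero [simp]: "a \<in> A \<Longrightarrow> lam a 0\<^sub>A = 0\<^sub>A"
  by (simp add: brace_lambda_def)

lemma lam_zero_left [simp]: "b \<in> A \<Longrightarrow> lam 0\<^sub>A b = b"
  by (simp add: brace_lambda_def)

lemma lam_neg: "a \<in> A \<Longrightarrow> b \<in> A \<Longrightarrow> lam a (\<boxminus> b) = \<boxminus> lam a b"
proof -
  assume ab: "a \<in> A" "b \<in> A"
  have "lam a (\<boxminus> b) \<boxplus> lam a b = 0\<^sub>A" using lam_add[of a "\<boxminus> b" b] ab by simp
  then show ?thesis using ab by (simp add: G.inv_equality)
qed

lemma lam_circ: "a \<in> A \<Longrightarrow> b \<in> A \<Longrightarrow> x \<in> A \<Longrightarrow> lam (a \<star> b) x = lam a (lam b x)"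
proof -
  assume abx: "a \<in> A" "b \<in> A" "x \<in> A"
  have "lam a (lam b x) = lam a (\<boxminus> b) \<boxplus> lam a (b \<star> x)"
    using abx by (simp add: brace_lambda_def[of G H b] lam_add)
  also have "\<dots> = \<boxminus> lam a b \<boxplus> lam a (b \<star> x)" using abx by (simp add: lam_neg)
  also have "\<dots> = lam (a \<star> b) x"
    using abx
    by (simp add: brace_lambda_def G.inv_mult_group H.m_assoc G.m_assoc[symmetric]) (simp add: G.m_assoc)
  finally show ?thesis by simp
qed

lemma lam_inv_left [simp]: "a \<in> A \<Longrightarrow> x \<in> A \<Longrightarrow> lam (inv\<^bsub>H\<^esub> a) (lam a x) = x"
  by (simp add: lam_circ[symmetric] one_H_eq_zero)

lemma lam_inv_right [simp]: "a \<in> A \<Longrightarrow> x \<in> A \<Longrightarrow> lam a (lam (inv\<^bsub>H\<^esub> a) x) = x"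
  by (simp add: lam_circ[symmetric] one_H_eq_zero)

lemma lam_inj: "a \<in> A \<Longrightarrow> x \<in> A \<Longrightarrow> y \<in> A \<Longrightarrow> lam a x = lam a y \<Longrightarrow> x = y"
  by (metis lam_inv_left)

lemma lam_Bij: "a \<in> A \<Longrightarrow> (\<lambda>x\<in>A. lam a x) \<in> Bij A"
  unfolding Bij_def
  by (auto intro!: bij_betwI[where g = "lam (inv\<^bsub>H\<^esub> a)"])

lemma lambda_action: "group_action H A (\<lambda>a. \<lambda>x\<in>A. lam a x)"
proof -
  have "(\<lambda>a. \<lambda>x\<in>A. lam a x) \<in> hom H (BijGroup A)"
    by (rule homI) (auto simp: BijGroup_def compose_def lam_Bij lam_circ)
  then show ?thesis
    by (simp add: group_action_def group_hom_def group_hom_axioms_def group_BijGroup)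
qed

lemma circ_eq_right_imp_zero: "a \<in> A \<Longrightarrow> b \<in> A \<Longrightarrow> a \<star> b = b \<Longrightarrow> a = 0\<^sub>A"
  using H.r_cancel_one[of b a] by (simp add: one_H_eq_zero)

lemma lam_hom: "a \<in> A \<Longrightarrow> lam a \<in> hom G G"
  by (rule homI) (simp_all add: lam_add)

lemma conj_hom: "a \<in> A \<Longrightarrow> (\<lambda>x. \<boxminus> a \<boxplus> x \<boxplus> a) \<in> hom G G"
  by (rule homI) (simp_all add: G.m_assoc)

lemma orbit_eq_image: "orb x = (\<lambda>a. lam a x) ` A"
  by (auto simp: lambda_orbit_def)

lemma lam_in_orbit: "a \<in> A \<Longrightarrow> lam a x \<in> orb x"
  by (auto simp: orbit_eq_image)

lemma orbit_self: "x \<in> A \<Longrightarrow> x \<in> orb x"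
  using lam_in_orbit[of "0\<^sub>A" x] by simp

lemma orbit_subset: "x \<in> A \<Longrightarrow> orb x \<subseteq> A"
  by (auto simp: orbit_eq_image)

lemma orbit_eq_of_mem: "x \<in> A \<Longrightarrow> y \<in> orb x \<Longrightarrow> orb y = orb x"
proof -
  assume x: "x \<in> A" and "y \<in> orb x"
  then obtain b where b: "b \<in> A" "y = lam b x" by (auto simp: orbit_eq_image)
  show ?thesis
  proof (intro equalityI subsetI)
    fix z assume "z \<in> orb y"
    then obtain a where "a \<in> A" "z = lam a y" by (auto simp: orbit_eq_image)
    then have "z = lam (a \<star> b) x" using b x by (simp add: lam_circ)
    then show "z \<in> orb x" using \<open>a \<in> A\<close> b lam_in_orbit by simp
  next
    fix z assume "z \<in> orb x"
    then obtain a where "a \<in> A" "z = lam a x" by (auto simp: orbit_eq_image)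
    then have "z = lam (a \<star> inv\<^bsub>H\<^esub> b) y" using b x by (simp add: lam_circ)
    then show "z \<in> orb y" using \<open>a \<in> A\<close> b lam_in_orbit by simp
  qed
qed

lemma orbits_disjoint: "x \<in> A \<Longrightarrow> y \<in> A \<Longrightarrow> orb x \<noteq> orb y \<Longrightarrow> orb x \<inter> orb y = {}"
  using orbit_eq_of_mem by blast

lemma card_orbit_mult_card_stabilizer:
  "x \<in> A \<Longrightarrow> card (orb x) * card {a \<in> A. lam a x = x} = card A"
proof -
  assume x: "x \<in> A"
  have "orbit H (\<lambda>a. \<lambda>x\<in>A. lam a x) x = orb x"
    using x by (auto simp: orbit_def lambda_orbit_def)
  moreover have "stabilizer H (\<lambda>a. \<lambda>x\<in>A. lam a x) x = {a \<in> A. lam a x = x}"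
    using x by (auto simp: stabilizer_def)
  ultimately show ?thesis
    using group_action.orbit_stabilizer_theorem[OF lambda_action x] by (simp add: order_def)
qed

lemma orbit_neg: "x \<in> A \<Longrightarrow> orb (\<boxminus> x) = neg ` orb x"
  by (auto simp: orbit_eq_image lam_neg image_image)

lemma orbit_double: "x \<in> A \<Longrightarrow> orb (x \<boxplus> x) = (\<lambda>y. y \<boxplus> y) ` orb x"
  by (auto simp: orbit_eq_image lam_add image_image)

lemma double_zero_on_orbit: "x \<in> A \<Longrightarrow> x \<boxplus> x = 0\<^sub>A \<Longrightarrow> y \<in> orb x \<Longrightarrow> y \<boxplus> y = 0\<^sub>A"
  using orbit_double[of x] by (auto simp: orbit_eq_image)

definition lambda_fixed :: "'a set" where
  "lambda_fixed = {x \<in> A. \<forall>a\<in>A. lam a x = x}"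

lemma zero_lambda_fixed: "0\<^sub>A \<in> lambda_fixed"
  by (simp add: lambda_fixed_def)

lemma orbit_eq_singleton_iff: "x \<in> A \<Longrightarrow> orb x = {x} \<longleftrightarrow> x \<in> lambda_fixed"
  by (auto simp: lambda_fixed_def orbit_eq_image)

lemma lambda_fixed_subgroup: "subgroup lambda_fixed G"
  by (rule G.subgroupI) (auto simp: lambda_fixed_def lam_neg lam_add)

lemma card_orbit_dvd: "x \<in> A \<Longrightarrow> card (orb x) dvd card A"
  by (metis card_orbit_mult_card_stabilizer dvd_triv_left)

lemma card_lambda_fixed_dvd: "card lambda_fixed dvd card A"
  using G.lagrange[OF lambda_fixed_subgroup] by (metis order_def dvd_triv_right)

lemma vertex_is_orbit: "L \<in> Lambda_vertices G H \<Longrightarrow> \<exists>x\<in>A. L = orb x \<and> 1 < card L"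
  by (auto simp: Lambda_vertices_def lambda_orbits_def)

lemma orbit_singleton_or_vertex:
  assumes "finite A" "x \<in> A"
  shows "orb x = {x} \<or> orb x \<in> Lambda_vertices G H"
proof (cases "card (orb x) = 1")
  case True
  then show ?thesis using orbit_self[OF assms(2)] by (metis card_1_singletonE singletonD)
next
  case False
  moreover have "card (orb x) \<noteq> 0"
    using assms orbit_self orbit_subset by (metis card_0_eq empty_iff finite_subset)
  ultimately have "1 < card (orb x)" by linarith
  then show ?thesis using assms(2) by (auto simp: Lambda_vertices_def lambda_orbits_def)
qed

lemma two_nonadjacent_vertices_orbit_sizes:
  assumes fin: "finite A"
    and V: "Lambda_vertices G H = {L1, L2}" "L1 \<noteq> L2" "\<not> Lambda_adj L1 L2"
  shows "A = insert 0\<^sub>A (L1 \<union> L2) \<and> {card L1, card L2} = {2, 3}"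
proof -
  obtain x1 x2 where x: "x1 \<in> A" "L1 = orb x1" "1 < card L1" "x2 \<in> A" "L2 = orb x2" "1 < card L2"
    using vertex_is_orbit V(1) by (metis insertCI)
  have A_eq: "A = lambda_fixed \<union> L1 \<union> L2"
  proof
    show "A \<subseteq> lambda_fixed \<union> L1 \<union> L2"
    proof
      fix y assume "y \<in> A"
      then consider "y \<in> lambda_fixed" | "orb y \<in> {L1, L2}"
        using orbit_singleton_or_vertex[OF fin] orbit_eq_singleton_iff V(1) by blast
      then show "y \<in> lambda_fixed \<union> L1 \<union> L2"
        using orbit_self[OF \<open>y \<in> A\<close>] by cases auto
    qed
    show "lambda_fixed \<union> L1 \<union> L2 \<subseteq> A"
      using x orbit_subset by (auto simp: lambda_fixed_def)
  qed
  have fixed_disj: "lambda_fixed \<inter> orb x = {}" if "x \<in> A" "1 < card (orb x)" for x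
  proof -
    have "y \<notin> lambda_fixed" if "y \<in> orb x" for y
    proof
      assume "y \<in> lambda_fixed"
      then have "orb y = {y}" using orbit_eq_singleton_iff by (simp add: lambda_fixed_def)
      then show False using orbit_eq_of_mem \<open>x \<in> A\<close> \<open>1 < card (orb x)\<close> that by auto
    qed
    then show ?thesis by blast
  qed
  have L_disj: "L1 \<inter> L2 = {}"
    using orbits_disjoint x V(2) by blast
  have finite: "finite lambda_fixed" "finite L1" "finite L2"
    using fin A_eq by (auto intro: finite_subset)
  have card_A: "card A = card lambda_fixed + card L1 + card L2"
    using A_eq finite L_disj fixed_disj[of x1] fixed_disj[of x2] x
    by (simp add: card_Un_disjoint Int_Un_distrib2)
  have "coprime (card L1) (card L2)"
    using V(2,3) by (simp add: Lambda_adj_def coprime_iff_gcd_eq_1)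
  then have "card lambda_fixed = 1 \<and> {card L1, card L2} = {2, 3}"
    using class_equation_two_orbits[of "card lambda_fixed" "card L1" "card L2"]
      card_A card_lambda_fixed_dvd card_orbit_dvd x finite(1) zero_lambda_fixed
    by (metis card_gt_0_iff empty_iff)
  moreover have "lambda_fixed = {0\<^sub>A}" if "card lambda_fixed = 1"
    using that zero_lambda_fixed by (metis card_1_singletonE singletonD)
  ultimately show ?thesis using A_eq by auto
qed

end

text \<open>The \<lambda>-orbits are {0}, C and L; C and L will turn out to be the 3-cycles and the
  transpositions of (A,+) \<cong> S_3.\<close>

locale three_orbit_brace = skew_brace_setting +
  fixes C L :: "'a set"
  assumes C_orbit: "C \<in> orb ` A" and card_C: "card C = 2"
    and L_orbit: "L \<in> orb ` A" and card_L: "card L = 3"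
    and A_eq: "A = insert 0\<^sub>A (C \<union> L)"
begin

lemma orbit_C: "c \<in> C \<Longrightarrow> orb c = C"
  using C_orbit orbit_eq_of_mem by blast

lemma orbit_L: "t \<in> L \<Longrightarrow> orb t = L"
  using L_orbit orbit_eq_of_mem by blast

lemma C_subset: "C \<subseteq> A" and L_subset: "L \<subseteq> A"
  using A_eq by auto

lemma lam_C [simp]: "a \<in> A \<Longrightarrow> c \<in> C \<Longrightarrow> lam a c \<in> C"
  using lam_in_orbit orbit_C by blast

lemma lam_L [simp]: "a \<in> A \<Longrightarrow> t \<in> L \<Longrightarrow> lam a t \<in> L"
  using lam_in_orbit orbit_L by blast

lemma orbit_zero: "orb 0\<^sub>A = {0\<^sub>A}"
  using orbit_eq_singleton_iff zero_lambda_fixed by simp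

lemma zero_notin_C: "0\<^sub>A \<notin> C" and zero_notin_L: "0\<^sub>A \<notin> L"
  using orbit_C orbit_L orbit_zero card_C card_L by force+

lemma C_L_disjoint: "c \<in> C \<Longrightarrow> c \<notin> L"
  using orbit_C orbit_L card_C card_L by force

lemma finite_C: "finite C" and finite_L: "finite L"
  using card_C card_L card_gt_0_iff by fastforce+

lemma finite_A: "finite A"
  using A_eq finite_C finite_L by simp

lemma card_A: "card A = 6"
proof -
  have "C \<inter> L = {}" using C_L_disjoint by blast
  then show ?thesis
    using A_eq card_C card_L zero_notin_C zero_notin_L
    by (simp add: card_Un_disjoint finite_C finite_L)
qed

lemma element_cases: "x \<in> A \<Longrightarrow> x = 0\<^sub>A \<or> x \<in> C \<or> x \<in> L"
  using A_eq by blast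

lemma mem_C_iff_card_orbit: "x \<in> A \<Longrightarrow> x \<in> C \<longleftrightarrow> card (orb x) = 2"
  using element_cases[of x] orbit_C[of x] orbit_L[of x] orbit_zero card_C card_L
    C_L_disjoint[of x] zero_notin_C by auto

lemma mem_L_iff_card_orbit: "x \<in> A \<Longrightarrow> x \<in> L \<longleftrightarrow> card (orb x) = 3"
  using element_cases[of x] orbit_C[of x] orbit_L[of x] orbit_zero card_C card_L
    C_L_disjoint[of x] zero_notin_L by auto

lemma lambda_fixed_eq_zero: "x \<in> A \<Longrightarrow> (\<And>a. a \<in> A \<Longrightarrow> lam a x = x) \<Longrightarrow> x = 0\<^sub>A"
proof -
  assume "x \<in> A" "\<And>a. a \<in> A \<Longrightarrow> lam a x = x"
  then have "orb x = {x}" using orbit_eq_singleton_iff by (simp add: lambda_fixed_def)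
  then show ?thesis
    using element_cases mem_C_iff_card_orbit mem_L_iff_card_orbit \<open>x \<in> A\<close> by fastforce
qed

lemma card_stabilizer_C: "c \<in> C \<Longrightarrow> card {a \<in> A. lam a c = c} = 3"
  using card_orbit_mult_card_stabilizer[of c] orbit_C card_C card_A C_subset by auto

lemma card_stabilizer_L: "t \<in> L \<Longrightarrow> card {a \<in> A. lam a t = t} = 2"
  using card_orbit_mult_card_stabilizer[of t] orbit_L card_L card_A L_subset by auto

lemma card_neg_image: "S \<subseteq> A \<Longrightarrow> card (neg ` S) = card S"
  by (meson G.inv_inj card_image inj_on_subset)

lemma neg_C: "c \<in> C \<Longrightarrow> \<boxminus> c \<in> C"
  using mem_C_iff_card_orbit[of "\<boxminus> c"] orbit_neg[of c] card_neg_image[OF C_subset]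
    orbit_C[of c] card_C C_subset by auto

lemma neg_L: "t \<in> L \<Longrightarrow> \<boxminus> t \<in> L"
  using mem_L_iff_card_orbit[of "\<boxminus> t"] orbit_neg[of t] card_neg_image[OF L_subset]
    orbit_L[of t] card_L L_subset by auto

text \<open>Negation is an involution of the odd set L, so it fixes some t0 \<in> L; doubling commutes
  with every \<lambda>_a, so t0 + t0 = 0 spreads over the orbit L.\<close>

lemma L_double_zero: "t \<in> L \<Longrightarrow> t \<boxplus> t = 0\<^sub>A"
proof -
  assume t: "t \<in> L"
  obtain t0 where t0: "t0 \<in> L" "\<boxminus> t0 = t0"
    using involution_fixpoint_card_3[of L neg] card_L neg_L L_subset by (auto simp: subset_eq)
  then have "t0 \<boxplus> t0 = 0\<^sub>A" using G.r_inv[of t0] L_subset by auto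
  then show ?thesis using double_zero_on_orbit[of t0 t] t0 t orbit_L L_subset by auto
qed

lemma neg_L_eq: "t \<in> L \<Longrightarrow> \<boxminus> t = t"
  using L_double_zero L_subset by (auto intro: G.inv_equality)

text \<open>If C = {c, d} consisted of involutions, then s = c + d would lie in L, so s = d + c, and
  s would be fixed by every \<lambda>_a, which either fixes or swaps c and d.\<close>

lemma C_double_ne_zero: "c \<in> C \<Longrightarrow> c \<boxplus> c \<noteq> 0\<^sub>A"
proof
  assume c: "c \<in> C" and cc: "c \<boxplus> c = 0\<^sub>A"
  have neg_eq: "\<boxminus> d = d" if "d \<in> C" for d
    using double_zero_on_orbit[OF _ cc] orbit_C c that C_subset by (auto intro: G.inv_equality)
  have "C \<noteq> {c}" using card_C by auto
  then obtain d where d: "d \<in> C" "d \<noteq> c" using c by blast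
  have C_eq: "C = {c, d}"
    using card_subset_eq[OF finite_C, of "{c, d}"] card_C c d by simp
  have cd: "c \<in> A" "d \<in> A" using c d C_subset by auto
  define s where "s = c \<boxplus> d"
  have "s \<noteq> 0\<^sub>A"
  proof
    assume "s = 0\<^sub>A"
    then have "\<boxminus> d = c" using cd by (auto simp: s_def intro: G.inv_equality)
    then show False using neg_eq d by simp
  qed
  moreover have "s \<noteq> c" "s \<noteq> d" using cd zero_notin_C c d by (auto simp: s_def)
  ultimately have "s \<in> L" using element_cases[of s] cd C_eq by (auto simp: s_def)
  have swap: "d \<boxplus> c = s"
    using neg_L_eq[OF \<open>s \<in> L\<close>] neg_eq c d cd by (simp add: s_def G.inv_mult_group)
  have "lam a s = s" if a: "a \<in> A" for a
  proof -
    have "lam a c \<in> C" "lam a d \<in> C" using a c d by auto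
    moreover have "lam a c \<noteq> lam a d" using lam_inj a cd d(2) by blast
    ultimately have "lam a c \<boxplus> lam a d \<in> {c \<boxplus> d, d \<boxplus> c}" using C_eq by auto
    then show ?thesis using a cd swap by (simp add: s_def lam_add)
  qed
  then have "s = 0\<^sub>A" using lambda_fixed_eq_zero cd by (simp add: s_def)
  with \<open>s \<noteq> 0\<^sub>A\<close> show False ..
qed

lemma neg_C_ne: "c \<in> C \<Longrightarrow> \<boxminus> c \<noteq> c"
proof
  assume c: "c \<in> C" and "\<boxminus> c = c"
  then have "c \<boxplus> c = 0\<^sub>A" using G.r_inv[of c] C_subset by auto
  then show False using C_double_ne_zero[OF c] by simp
qed

lemma C_eq: "c \<in> C \<Longrightarrow> C = {c, \<boxminus> c}"
  using card_subset_eq[OF finite_C, of "{c, \<boxminus> c}"] card_C neg_C neg_C_ne by fastforce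

lemma C_double: "c \<in> C \<Longrightarrow> c \<boxplus> c = \<boxminus> c"
proof -
  assume c: "c \<in> C"
  have cA: "c \<in> A" using c C_subset by auto
  have "card (orb (c \<boxplus> c)) \<le> 2"
    using orbit_double[OF cA] orbit_C[OF c] card_C card_image_le[of C "\<lambda>y. y \<boxplus> y"]
      card_gt_0_iff by fastforce
  then have "c \<boxplus> c \<notin> L" using mem_L_iff_card_orbit cA by auto
  moreover have "c \<boxplus> c \<noteq> c" using cA c zero_notin_C by auto
  ultimately show ?thesis
    using element_cases[of "c \<boxplus> c"] C_double_ne_zero[OF c] C_eq[OF c] cA by auto
qed

lemma neg_C_double: "c \<in> C \<Longrightarrow> \<boxminus> c \<boxplus> \<boxminus> c = c"
  using C_double[OF neg_C] C_subset by auto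

lemma L_add_C: "t \<in> L \<Longrightarrow> c \<in> C \<Longrightarrow> t \<boxplus> c \<in> L"
proof -
  assume t: "t \<in> L" and c: "c \<in> C"
  have tc: "t \<in> A" "c \<in> A" using t c L_subset C_subset by auto
  have "t \<boxplus> c \<noteq> 0\<^sub>A"
  proof
    assume "t \<boxplus> c = 0\<^sub>A"
    then have "\<boxminus> c = t" using tc by (auto intro: G.inv_equality)
    then show False using neg_C[OF c] C_L_disjoint t by auto
  qed
  moreover have "t \<boxplus> c \<noteq> c" using tc t zero_notin_L by auto
  moreover have "t \<boxplus> c \<noteq> \<boxminus> c"
  proof
    assume "t \<boxplus> c = \<boxminus> c"
    then have "t = \<boxminus> c \<boxplus> \<boxminus> c" using tc by (simp add: G.inv_solve_right)
    then show False using neg_C_double[OF c] C_L_disjoint[OF c] t by simp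
  qed
  ultimately show ?thesis using element_cases[of "t \<boxplus> c"] C_eq[OF c] tc by auto
qed

lemma C_add_L: "c \<in> C \<Longrightarrow> t \<in> L \<Longrightarrow> c \<boxplus> t \<in> L"
proof -
  assume c: "c \<in> C" and t: "t \<in> L"
  have tc: "t \<in> A" "c \<in> A" using t c L_subset C_subset by auto
  have "c \<boxplus> t \<noteq> 0\<^sub>A"
  proof
    assume "c \<boxplus> t = 0\<^sub>A"
    then have "\<boxminus> t = c" using tc by (auto intro: G.inv_equality)
    then show False using neg_L[OF t] C_L_disjoint c by auto
  qed
  moreover have "c \<boxplus> t \<noteq> c" using tc t zero_notin_L by auto
  moreover have "c \<boxplus> t \<noteq> \<boxminus> c"
  proof
    assume "c \<boxplus> t = \<boxminus> c"
    then have "t = \<boxminus> c \<boxplus> \<boxminus> c" using tc by (simp add: G.inv_solve_left)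
    then show False using neg_C_double[OF c] C_L_disjoint[OF c] t by simp
  qed
  ultimately show ?thesis using element_cases[of "c \<boxplus> t"] C_eq[OF c] tc by auto
qed

lemma L_eq: "t \<in> L \<Longrightarrow> c \<in> C \<Longrightarrow> L = {t, t \<boxplus> c, t \<boxplus> \<boxminus> c}"
proof -
  assume t: "t \<in> L" and c: "c \<in> C"
  have tc: "t \<in> A" "c \<in> A" using t c L_subset C_subset by auto
  have sub: "{t, t \<boxplus> c, t \<boxplus> \<boxminus> c} \<subseteq> L" using t c L_add_C neg_C by auto
  have "c \<noteq> 0\<^sub>A" "\<boxminus> c \<noteq> 0\<^sub>A" using c neg_C[OF c] zero_notin_C by auto
  then have "card {t, t \<boxplus> c, t \<boxplus> \<boxminus> c} = 3"
    using tc neg_C_ne[OF c] by auto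
  then show ?thesis using card_subset_eq[OF finite_L sub] card_L by simp
qed

lemma C_add_L_eq: "c \<in> C \<Longrightarrow> t \<in> L \<Longrightarrow> c \<boxplus> t = t \<boxplus> \<boxminus> c"
proof -
  assume c: "c \<in> C" and t: "t \<in> L"
  have tc: "t \<in> A" "c \<in> A" using t c L_subset C_subset by auto
  have "c \<boxplus> t \<noteq> t" using tc c zero_notin_C by auto
  moreover have "c \<boxplus> t \<noteq> t \<boxplus> c"
  proof
    assume comm: "c \<boxplus> t = t \<boxplus> c"
    have "(t \<boxplus> c) \<boxplus> (t \<boxplus> c) = t \<boxplus> ((c \<boxplus> t) \<boxplus> c)" using tc by (simp add: G.m_assoc)
    also have "\<dots> = (t \<boxplus> t) \<boxplus> (c \<boxplus> c)" using tc comm by (simp add: G.m_assoc)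
    also have "\<dots> = \<boxminus> c" using L_double_zero[OF t] C_double[OF c] tc by simp
    finally show False
      using L_double_zero[OF L_add_C[OF t c]] neg_C[OF c] zero_notin_C by auto
  qed
  ultimately show ?thesis using C_add_L[OF c t] L_eq[OF t c] by auto
qed

lemma neg_C_add_L_eq: "c \<in> C \<Longrightarrow> t \<in> L \<Longrightarrow> \<boxminus> c \<boxplus> t = t \<boxplus> c"
  using C_add_L_eq[OF neg_C] C_subset by auto

lemma C_nonempty: "C \<noteq> {}" and L_nonempty: "L \<noteq> {}"
  using card_C card_L by auto

lemma card_zero_C_neg_C: "c \<in> C \<Longrightarrow> card {0\<^sub>A, c, \<boxminus> c} = 3"
proof -
  assume c: "c \<in> C"
  then have "0\<^sub>A \<noteq> c" "0\<^sub>A \<noteq> \<boxminus> c" "c \<noteq> \<boxminus> c"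
    using neg_C zero_notin_C neg_C_ne by metis+
  then show ?thesis by simp
qed

lemma lam_C_self: "c \<in> C \<Longrightarrow> lam c c = c"
proof (rule ccontr)
  assume c: "c \<in> C" and "lam c c \<noteq> c"
  have cA: "c \<in> A" using c C_subset by auto
  have "lam c c = \<boxminus> c" using lam_C[OF cA c] C_eq[OF c] \<open>lam c c \<noteq> c\<close> by auto
  then have "c \<star> \<boxminus> c = \<boxminus> c"
    using cA C_double[OF c] by (simp add: circ_eq_add_lam lam_neg)
  then have "c = 0\<^sub>A" using circ_eq_right_imp_zero cA by simp
  then show False using c zero_notin_C by simp
qed

lemma lam_neg_C_self: "c \<in> C \<Longrightarrow> lam (\<boxminus> c) c = c"
proof -
  assume c: "c \<in> C"
  then have cA: "c \<in> A" using C_subset by auto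
  have "\<boxminus> lam (\<boxminus> c) c = \<boxminus> c"
    using lam_C_self[OF neg_C[OF c]] lam_neg[of "\<boxminus> c" c] cA by simp
  then have "\<boxminus> (\<boxminus> lam (\<boxminus> c) c) = \<boxminus> (\<boxminus> c)" by simp
  then show ?thesis using cA by simp
qed

lemma circ_C_self: "c \<in> C \<Longrightarrow> c \<star> c = \<boxminus> c"
  using lam_C_self C_double C_subset by (auto simp: circ_eq_add_lam)

lemma stabilizer_C: "c \<in> C \<Longrightarrow> {a \<in> A. lam a c = c} = {0\<^sub>A, c, \<boxminus> c}"
proof -
  assume c: "c \<in> C"
  have sub: "{0\<^sub>A, c, \<boxminus> c} \<subseteq> {a \<in> A. lam a c = c}"
    using c C_subset lam_C_self lam_neg_C_self by auto
  then show ?thesis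
    using card_subset_eq[OF _ sub] card_zero_C_neg_C[OF c] card_stabilizer_C[OF c] finite_A by simp
qed

lemma lam_L_C: "t \<in> L \<Longrightarrow> c \<in> C \<Longrightarrow> lam t c = \<boxminus> c"
proof -
  assume t: "t \<in> L" and c: "c \<in> C"
  have "t \<notin> {0\<^sub>A, c, \<boxminus> c}" using t c neg_C zero_notin_L C_L_disjoint by auto
  then have "lam t c \<noteq> c" using stabilizer_C[OF c] t L_subset by blast
  then show ?thesis using lam_C[of t c] C_eq[OF c] t c L_subset by auto
qed

lemma lam_C_L_ne: "c \<in> C \<Longrightarrow> t \<in> L \<Longrightarrow> lam c t \<noteq> t"
proof
  assume c: "c \<in> C" and t: "t \<in> L" and fixed: "lam c t = t"
  have "lam (\<boxminus> c) t = t"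
    using fixed c t C_subset L_subset by (simp add: circ_C_self[OF c, symmetric] lam_circ subsetD)
  then have sub: "{0\<^sub>A, c, \<boxminus> c} \<subseteq> {a \<in> A. lam a t = t}"
    using fixed c neg_C[OF c] t C_subset L_subset by auto
  show False
    using card_mono[OF _ sub] card_zero_C_neg_C[OF c] card_stabilizer_L[OF t] finite_A by simp
qed

lemma lam_L_self: "t \<in> L \<Longrightarrow> lam t t = t"
proof (rule ccontr)
  assume t: "t \<in> L" and "lam t t \<noteq> t"
  have tA: "t \<in> A" using t L_subset by auto
  obtain c where c: "c \<in> C" using C_nonempty by blast
  obtain e where e: "e \<in> C" "lam t t = t \<boxplus> e"
    using lam_L[OF tA t] L_eq[OF t c] \<open>lam t t \<noteq> t\<close> c neg_C by auto
  have eA: "e \<in> A" using e C_subset by auto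
  have "t \<star> t = e"
    using e tA eA L_double_zero[OF t] by (simp add: circ_eq_add_lam G.m_assoc[symmetric])
  moreover have "lam t (lam t t) = t"
    using e tA eA lam_L_C[OF t e(1)] by (simp add: lam_add G.m_assoc)
  ultimately have "lam e t = t" using lam_circ[OF tA tA tA] by simp
  then show False using lam_C_L_ne[OF e(1) t] by simp
qed

lemma lam_C_L: "c \<in> C \<Longrightarrow> t \<in> L \<Longrightarrow> lam c t = t \<boxplus> \<boxminus> c"
proof -
  assume c: "c \<in> C" and t: "t \<in> L"
  have tc: "t \<in> A" "c \<in> A" using t c L_subset C_subset by auto
  have "lam c t \<noteq> t \<boxplus> c"
  proof
    assume "lam c t = t \<boxplus> c"
    then have "c \<star> t = t"
      using tc C_add_L_eq[OF c t]
      by (simp add: circ_eq_add_lam G.m_assoc[symmetric]) (simp add: G.m_assoc)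
    then have "lam c t = t"
      using tc lam_L_self[OF t] by (metis lam_circ)
    then show False using lam_C_L_ne[OF c t] by simp
  qed
  then show ?thesis
    using lam_L[OF tc(2) t] L_eq[OF t c] lam_C_L_ne[OF c t] by auto
qed

lemma lam_eq_conj_on_L: "a \<in> A \<Longrightarrow> t \<in> L \<Longrightarrow> lam a t = \<boxminus> a \<boxplus> t \<boxplus> a"
proof -
  assume a: "a \<in> A" and t: "t \<in> L"
  have tA: "t \<in> A" using t L_subset by auto
  consider "a = 0\<^sub>A" | "a \<in> L" | "a \<in> C" using element_cases[OF a] by blast
  then show ?thesis
  proof cases
    case 1
    then show ?thesis using tA by simp
  next
    case 2
    obtain c where c: "c \<in> C" using C_nonempty by blast
    consider "t = a" | e where "e \<in> C" "t = a \<boxplus> e" using L_eq[OF 2 c] t c neg_C by auto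
    then show ?thesis
    proof cases
      case 1
      then show ?thesis using lam_L_self[OF 2] neg_L_eq[OF 2] L_double_zero[OF 2] a by simp
    next
      case (2 e)
      have eA: "e \<in> A" using 2 C_subset by auto
      have "lam a t = a \<boxplus> \<boxminus> e"
        using 2 a eA lam_L_self[OF \<open>a \<in> L\<close>] lam_L_C[OF \<open>a \<in> L\<close> 2(1)] by (simp add: lam_add)
      also have "\<dots> = \<boxminus> a \<boxplus> t \<boxplus> a"
        using 2 a eA C_add_L_eq[OF 2(1) \<open>a \<in> L\<close>] by (simp add: G.m_assoc)
      finally show ?thesis .
    qed
  next
    case 3
    have "lam a t = t \<boxplus> (a \<boxplus> a)" using lam_C_L[OF 3 t] C_double[OF 3] by simp
    also have "\<dots> = \<boxminus> a \<boxplus> t \<boxplus> a"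
      using a tA neg_C_add_L_eq[OF 3 t] by (simp add: G.m_assoc)
    finally show ?thesis .
  qed
qed

text \<open>L generates (A,+): every c \<in> C equals t + (t + c) for any t \<in> L.\<close>

lemma hom_eq_of_eq_on_L:
  assumes f: "f \<in> hom G G" and g: "g \<in> hom G G"
    and eq: "\<And>t. t \<in> L \<Longrightarrow> f t = g t" and x: "x \<in> A"
  shows "f x = g x"
proof -
  consider "x = 0\<^sub>A" | "x \<in> L" | "x \<in> C" using element_cases[OF x] by blast
  then show ?thesis
  proof cases
    case 1
    then show ?thesis using hom_one[OF f] hom_one[OF g] G.group_axioms by simp
  next
    case 2
    then show ?thesis by (rule eq)
  next
    case 3
    obtain t where t: "t \<in> L" using L_nonempty by blast
    have tx: "t \<boxplus> x \<in> L" using L_add_C[OF t 3] .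
    have tA: "t \<in> A" "t \<boxplus> x \<in> A" using t tx L_subset by auto
    have "x = t \<boxplus> (t \<boxplus> x)"
      using tA x L_double_zero[OF t] by (simp add: G.m_assoc[symmetric])
    moreover have "f (t \<boxplus> (t \<boxplus> x)) = g (t \<boxplus> (t \<boxplus> x))"
      using hom_mult[OF f tA] hom_mult[OF g tA] eq[OF t] eq[OF tx] by simp
    ultimately show ?thesis by simp
  qed
qed

lemma lam_eq_conj: "a \<in> A \<Longrightarrow> x \<in> A \<Longrightarrow> lam a x = \<boxminus> a \<boxplus> x \<boxplus> a"
  by (rule hom_eq_of_eq_on_L[OF lam_hom conj_hom lam_eq_conj_on_L])

theorem circ_eq_add_swap: "a \<in> A \<Longrightarrow> b \<in> A \<Longrightarrow> a \<star> b = b \<boxplus> a"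
  by (simp add: circ_eq_add_lam lam_eq_conj G.m_assoc)

lemma add_center_trivial: "k \<in> A \<Longrightarrow> (\<And>x. x \<in> A \<Longrightarrow> k \<boxplus> x = x \<boxplus> k) \<Longrightarrow> k = 0\<^sub>A"
proof (rule ccontr)
  assume k: "k \<in> A" and central: "\<And>x. x \<in> A \<Longrightarrow> k \<boxplus> x = x \<boxplus> k" and "k \<noteq> 0\<^sub>A"
  then consider "k \<in> L" | "k \<in> C" using element_cases by blast
  then show False
  proof cases
    case 1
    obtain c where c: "c \<in> C" using C_nonempty by blast
    then have "k \<boxplus> c = k \<boxplus> \<boxminus> c"
      using central C_add_L_eq[OF c 1] C_subset by auto
    then show False using neg_C_ne[OF c] c k C_subset by auto
  next
    case 2
    obtain t where t: "t \<in> L" using L_nonempty by blast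
    then have "t \<boxplus> k = t \<boxplus> \<boxminus> k"
      using central C_add_L_eq[OF 2 t] L_subset by auto
    then show False using neg_C_ne[OF 2] t k L_subset by auto
  qed
qed

lemma conj_eq_on_L_imp_eq:
  assumes "a \<in> A" "b \<in> A" "\<And>t. t \<in> L \<Longrightarrow> \<boxminus> a \<boxplus> t \<boxplus> a = \<boxminus> b \<boxplus> t \<boxplus> b"
  shows "a = b"
proof -
  have "(b \<boxplus> \<boxminus> a) \<boxplus> x = x \<boxplus> (b \<boxplus> \<boxminus> a)" if x: "x \<in> A" for x
  proof -
    have "\<boxminus> a \<boxplus> x \<boxplus> a = \<boxminus> b \<boxplus> x \<boxplus> b"
      using hom_eq_of_eq_on_L[OF conj_hom conj_hom, of a b] assms x by blast
    then have "b \<boxplus> (\<boxminus> a \<boxplus> x \<boxplus> a) \<boxplus> \<boxminus> a = b \<boxplus> (\<boxminus> b \<boxplus> x \<boxplus> b) \<boxplus> \<boxminus> a" by simp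
    then show ?thesis using assms x by (simp add: G.m_assoc)
  qed
  then have "b \<boxplus> \<boxminus> a = 0\<^sub>A" using add_center_trivial assms by simp
  then show ?thesis using assms G.inv_solve_right'[of "0\<^sub>A" b a] by simp
qed

definition L_enum :: "nat \<Rightarrow> 'a" where
  "L_enum = (SOME h. bij_betw h {1..3} L)"

lemma bij_L_enum: "bij_betw L_enum {1..3} L"
  unfolding L_enum_def using ex_bij_betw_nat_finite_1[OF finite_L] card_L by (metis someI_ex)

definition L_index :: "'a \<Rightarrow> nat" where
  "L_index = inv_into {1..3} L_enum"

lemma L_enum_in: "i \<in> {1..3} \<Longrightarrow> L_enum i \<in> L"
  using bij_L_enum by (auto dest: bij_betwE)

lemma L_index_in: "t \<in> L \<Longrightarrow> L_index t \<in> {1..3}"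
  unfolding L_index_def using bij_betw_inv_into[OF bij_L_enum] by (auto dest: bij_betwE)

lemma L_enum_index [simp]: "t \<in> L \<Longrightarrow> L_enum (L_index t) = t"
  unfolding L_index_def using bij_L_enum by (simp add: bij_betw_inv_into_right)

lemma L_index_enum [simp]: "i \<in> {1..3} \<Longrightarrow> L_index (L_enum i) = i"
  unfolding L_index_def using bij_L_enum by (simp add: bij_betw_inv_into_left)

definition lambda_perm :: "'a \<Rightarrow> nat \<Rightarrow> nat" where
  "lambda_perm a i = (if i \<in> {1..3} then L_index (lam a (L_enum i)) else i)"

lemma lambda_perm_in: "i \<in> {1..3} \<Longrightarrow> lambda_perm a i = L_index (lam a (L_enum i))"
  by (simp add: lambda_perm_def)

lemma lambda_perm_out: "i \<notin> {1..3} \<Longrightarrow> lambda_perm a i = i"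
  unfolding lambda_perm_def by (rule if_not_P)

lemma lambda_perm_permutes: "a \<in> A \<Longrightarrow> lambda_perm a permutes {1..3}"
proof (rule bij_imp_permutes)
  assume a: "a \<in> A"
  have maps: "lambda_perm a ` {1..3} \<subseteq> {1..3}"
    using a L_enum_in L_index_in by (auto simp: lambda_perm_in)
  have "inj_on (lambda_perm a) {1..3}"
  proof
    fix i j assume ij: "i \<in> {1..3}" "j \<in> {1..3}" and "lambda_perm a i = lambda_perm a j"
    then have "L_enum (L_index (lam a (L_enum i))) = L_enum (L_index (lam a (L_enum j)))"
      by (simp add: lambda_perm_in)
    then have "lam a (L_enum i) = lam a (L_enum j)" using a ij L_enum_in by simp
    then have "L_enum i = L_enum j" using lam_inj a ij L_enum_in L_subset by blast
    then show "i = j" using ij L_index_enum by metis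
  qed
  then show "bij_betw (lambda_perm a) {1..3} {1..3}"
    using endo_inj_surj[OF _ maps] by (simp add: bij_betw_def)
qed (rule lambda_perm_out)

lemma lambda_perm_circ: "a \<in> A \<Longrightarrow> b \<in> A \<Longrightarrow> lambda_perm (a \<star> b) = lambda_perm a \<circ> lambda_perm b"
proof
  fix i assume ab: "a \<in> A" "b \<in> A"
  show "lambda_perm (a \<star> b) i = (lambda_perm a \<circ> lambda_perm b) i"
  proof (cases "i \<in> {1..3}")
    case True
    then have "lam b (L_enum i) \<in> L" using ab L_enum_in by simp
    then show ?thesis
      using True ab L_enum_in L_index_in L_subset by (simp add: lambda_perm_in lam_circ subsetD)
  qed (simp add: lambda_perm_out)
qed

lemma lambda_perm_inj: "inj_on lambda_perm A"
proof
  fix a b assume a: "a \<in> A" and b: "b \<in> A" and eq: "lambda_perm a = lambda_perm b"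
  have "lam a t = lam b t" if t: "t \<in> L" for t
  proof -
    have "L_index (lam a t) = L_index (lam b t)"
      using fun_cong[OF eq, of "L_index t"] t L_index_in by (simp add: lambda_perm_in)
    then have "L_enum (L_index (lam a t)) = L_enum (L_index (lam b t))" by simp
    then show ?thesis using a b t by simp
  qed
  then show "a = b"
    using conj_eq_on_L_imp_eq[OF a b] lam_eq_conj a b L_subset by (metis subsetD)
qed

lemma card_sym_group_3: "card (carrier (sym_group 3)) = 6"
proof -
  have "card {p. p permutes {1..3::nat}} = fact 3" by (rule card_permutations) auto
  then show ?thesis by (simp add: sym_group_def fact_numeral)
qed

lemma lambda_perm_bij: "bij_betw lambda_perm A (carrier (sym_group 3))"
proof -
  have sub: "lambda_perm ` A \<subseteq> carrier (sym_group 3)"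
    using lambda_perm_permutes by (auto simp: sym_group_carrier)
  have "finite (carrier (sym_group 3))" using card_sym_group_3 card_gt_0_iff by fastforce
  moreover have "card (lambda_perm ` A) = card (carrier (sym_group 3))"
    using card_image[OF lambda_perm_inj] card_A card_sym_group_3 by simp
  ultimately show ?thesis
    using card_subset_eq[OF _ sub] lambda_perm_inj by (simp add: bij_betw_def)
qed

theorem lambda_perm_skew_brace_iso: "skew_brace_iso G H S3_add S3_circ lambda_perm"
  unfolding skew_brace_iso_def
proof (intro conjI ballI)
  show "bij_betw lambda_perm A (carrier S3_add)"
    using lambda_perm_bij by (simp add: S3_add_def)
next
  fix a b assume ab: "a \<in> A" "b \<in> A"
  show "lambda_perm (a \<star> b) = lambda_perm a \<otimes>\<^bsub>S3_circ\<^esub> lambda_perm b"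
    using lambda_perm_circ ab by (simp add: S3_circ_def sym_group_mult)
  show "lambda_perm (a \<boxplus> b) = lambda_perm a \<otimes>\<^bsub>S3_add\<^esub> lambda_perm b"
    using lambda_perm_circ[of b a] circ_eq_add_swap[of b a] ab by (simp add: S3_add_def sym_group_mult)
qed

end

lemma (in skew_brace_setting) three_orbit_brace_of_two_nonadjacent_vertices:
  assumes "finite A" "\<exists>L1 L2. Lambda_vertices G H = {L1, L2} \<and> L1 \<noteq> L2 \<and> \<not> Lambda_adj L1 L2"
  shows "\<exists>C L. three_orbit_brace G H C L"
proof -
  obtain L1 L2 where V: "Lambda_vertices G H = {L1, L2}" "L1 \<noteq> L2" "\<not> Lambda_adj L1 L2"
    using assms(2) by blast
  then have A_eq: "A = insert 0\<^sub>A (L1 \<union> L2)" and sizes: "{card L1, card L2} = {2, 3}"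
    using two_nonadjacent_vertices_orbit_sizes[OF assms(1) V] by auto
  have orbits: "L1 \<in> orb ` A" "L2 \<in> orb ` A"
    using vertex_is_orbit[of L1] vertex_is_orbit[of L2] V(1) by auto
  from sizes consider "card L1 = 2" "card L2 = 3" | "card L1 = 3" "card L2 = 2"
    unfolding doubleton_eq_iff by blast
  then show ?thesis
  proof cases
    case 1
    then have "three_orbit_brace G H L1 L2"
      by (intro three_orbit_brace.intro three_orbit_brace_axioms.intro skew_brace_setting_axioms)
        (use orbits A_eq in simp_all)
    then show ?thesis by blast
  next
    case 2
    then have "three_orbit_brace G H L2 L1"
      by (intro three_orbit_brace.intro three_orbit_brace_axioms.intro skew_brace_setting_axioms)
        (use orbits A_eq in \<open>simp_all add: Un_commute\<close>)
    then show ?thesis by blast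
  qed
qed

theorem mainTheorem10:
  fixes G H :: "'a monoid"
  assumes "skew_brace G H"
    and "finite (carrier G)"
    and "\<exists>L1 L2. Lambda_vertices G H = {L1, L2} \<and> L1 \<noteq> L2 \<and> \<not> Lambda_adj L1 L2"
  shows "\<exists>f. skew_brace_iso G H S3_add S3_circ f"
proof -
  interpret skew_brace_setting G H
    by (rule skew_brace_setting.intro) (rule assms(1))
  obtain C L where "three_orbit_brace G H C L"
    using three_orbit_brace_of_two_nonadjacent_vertices assms(2,3) by blast
  then show ?thesis
    using three_orbit_brace.lambda_perm_skew_brace_iso by blast
qed

end
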